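(* Let $\tilde L$ be a minimum-size counterexample. If $M$ is a nonempty set of meet-irreducible elements of $\tilde L$, then there exists a join-irreducible element $j$ of $\tilde L$ such that $|{\uparrow}j\cap M|>\frac{|M|}{2}$.
   Context: For a poset $P$, $x$ upper covers $y$ (and $y$ lower covers $x$) if $y<x$ with nothing strictly between. Join-irreducible: upper covers exactly one element; meet-irreducible: lower covers exactly one element. For $x\in P$, ${\uparrow}x=\{y\in P: x\le y\}$. A counterexample is a finite lattice $L$ with $|L|>1$ in which every join-irreducible $j$ satisfies $|{\uparrow}j|>|L|/2$; a minimum-size counterexample is a counterexample $\tilde L$ such that no counterexample has fewer elements. *)

theory Defs
  imports Complex_Main "HOL-Algebra.Lattice"
begin

definition upper_covers :: "('a, 'b) gorder_scheme \<Rightarrow> 'a \<Rightarrow> 'a \<Rightarrow> bool" where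
  "upper_covers L x y \<longleftrightarrow> x \<in> carrier L \<and> y \<in> carrier L \<and> y \<sqsubset>\<^bsub>L\<^esub> x \<and>
     \<not> (\<exists>z \<in> carrier L. y \<sqsubset>\<^bsub>L\<^esub> z \<and> z \<sqsubset>\<^bsub>L\<^esub> x)"

definition join_irreducible :: "('a, 'b) gorder_scheme \<Rightarrow> 'a \<Rightarrow> bool" where
  "join_irreducible L j \<longleftrightarrow> j \<in> carrier L \<and> (\<exists>!y. upper_covers L j y)"

definition meet_irreducible :: "('a, 'b) gorder_scheme \<Rightarrow> 'a \<Rightarrow> bool" where
  "meet_irreducible L m \<longleftrightarrow> m \<in> carrier L \<and> (\<exists>!y. upper_covers L y m)"

definition up_set :: "('a, 'b) gorder_scheme \<Rightarrow> 'a \<Rightarrow> 'a set" where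
  "up_set L x = {y \<in> carrier L. x \<sqsubseteq>\<^bsub>L\<^esub> y}"

definition counterexample :: "('a, 'b) gorder_scheme \<Rightarrow> bool" where
  "counterexample L \<longleftrightarrow> lattice L \<and> finite (carrier L) \<and> card (carrier L) > 1 \<and>
     (\<forall>j. join_irreducible L j \<longrightarrow> real (card (up_set L j)) > real (card (carrier L)) / 2)"

text \<open>Competing lattices are
  taken with carriers in the same element type; since that type contains the
  carrier of L, every finite lattice with fewer elements has an isomorphic copy there.\<close>
definition min_counterexample :: "'a gorder \<Rightarrow> bool" where
  "min_counterexample L \<longleftrightarrow> counterexample L \<and>
     (\<forall>K :: 'a gorder. counterexample K \<longrightarrow> card (carrier L) \<le> card (carrier K))"

end

theory Submission
  imports Defs
begin

text \<open>Suppose every join-irreducible element has at most half of \<open>M\<close> above it.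
  A meet-irreducible element is never a proper meet, so \<open>S = L - M\<close> is closed under meets;
  it also contains the top, hence is a lattice with fewer elements than \<open>L\<close> and so not a
  counterexample. If \<open>S\<close> is just the top, then every other element is meet-irreducible,
  which makes the top join-irreducible, impossible in a counterexample. Otherwise some
  join-irreducible \<open>j\<close> of \<open>S\<close> has at most \<open>|S|/2\<close> elements of \<open>S\<close> above it. A minimal
  \<open>x \<in> L\<close> with the same upper bounds in \<open>S\<close> as \<open>j\<close> is join-irreducible in \<open>L\<close>, and
  splitting \<open>\<up>x\<close> into its parts in \<open>M\<close> and in \<open>S\<close> gives \<open>|\<up>x| \<le> |L|/2\<close>.\<close>

lemma partial_order_restrict:
  assumes "partial_order L" and "S \<subseteq> carrier L"
  shows "partial_order (L\<lparr>carrier := S\<rparr>)"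
proof -
  interpret L: partial_order L by fact
  interpret weak_partial_order "L\<lparr>carrier := S\<rparr>"
    using L.weak_partial_order_axioms assms(2) by (rule weak_partial_order_subset)
  show ?thesis
    by unfold_locales (simp add: L.eq_is_equal)
qed

lemma lless_restrict [simp]: "x \<sqsubset>\<^bsub>L\<lparr>carrier := S\<rparr>\<^esub> y \<longleftrightarrow> x \<sqsubset>\<^bsub>L\<^esub> y"
  by (simp add: lless_def)

context partial_order
begin

lemma lless_inv_gorder [simp]: "x \<sqsubset>\<^bsub>inv_gorder L\<^esub> y \<longleftrightarrow> y \<sqsubset> x"
  by (auto simp: lless_def eq_is_equal)

lemma upper_covers_inv_gorder [simp]: "upper_covers (inv_gorder L) x y \<longleftrightarrow> upper_covers L y x"
  by (auto simp: upper_covers_def)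

lemma upper_covers_interval:
  assumes "upper_covers L x y" and "z \<in> carrier L" and "y \<sqsubseteq> z" and "z \<sqsubseteq> x"
  shows "z = y \<or> z = x"
  using assms by (auto simp: upper_covers_def lless_eq)

lemma finite_ex_minimal:
  assumes "finite (carrier L)" and "A \<subseteq> carrier L" and "A \<noteq> {}"
  shows "\<exists>a\<in>A. \<forall>b\<in>A. \<not> b \<sqsubset> a"
proof -
  let ?R = "{(b, a). b \<in> carrier L \<and> a \<in> carrier L \<and> b \<sqsubset> a}"
  have "finite ?R"
    by (rule finite_subset[of _ "carrier L \<times> carrier L"]) (use assms(1) in auto)
  moreover have "trans ?R"
    by (auto intro!: transI elim: lless_trans)
  then have "acyclic ?R"
    by (simp add: acyclic_def lless_eq)
  ultimately have "wf ?R"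
    by (rule finite_acyclic_wf)
  then obtain a where "a \<in> A" and "\<And>b. (b, a) \<in> ?R \<Longrightarrow> b \<notin> A"
    using assms(3) by (rule wfE_min') blast
  with assms(2) show ?thesis
    by blast
qed

lemma ex_upper_cover_le:
  assumes "finite (carrier L)" and "x \<in> carrier L" and "y \<in> carrier L" and "y \<sqsubset> x"
  shows "\<exists>z. upper_covers L z y \<and> z \<sqsubseteq> x"
proof -
  let ?A = "{z \<in> carrier L. y \<sqsubset> z \<and> z \<sqsubseteq> x}"
  obtain z where z: "z \<in> ?A" and z_min: "\<forall>w\<in>?A. \<not> w \<sqsubset> z"
    using finite_ex_minimal[OF assms(1), of ?A] assms by auto
  have "upper_covers L z y"
    unfolding upper_covers_def
  proof (intro conjI notI)
    show "z \<in> carrier L" "y \<in> carrier L" "y \<sqsubset> z"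
      using z assms(3) by auto
  next
    assume "\<exists>w\<in>carrier L. y \<sqsubset> w \<and> w \<sqsubset> z"
    then obtain w where "w \<in> carrier L" "y \<sqsubset> w" "w \<sqsubset> z"
      by blast
    moreover have "w \<sqsubseteq> x"
      using calculation z assms(2) by (auto simp: lless_eq intro: le_trans)
    ultimately show False
      using z_min by blast
  qed
  with z show ?thesis
    by blast
qed

lemma ex_lower_cover_ge:
  assumes "finite (carrier L)" and "x \<in> carrier L" and "y \<in> carrier L" and "y \<sqsubset> x"
  shows "\<exists>z. upper_covers L x z \<and> y \<sqsubseteq> z"
  using partial_order.ex_upper_cover_le[OF dual_order, of y x] assms by simp

lemma meet_irreducible_cover_le:
  assumes "finite (carrier L)" and "meet_irreducible L m" and "upper_covers L c m"
    and "x \<in> carrier L" and "m \<sqsubset> x"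
  shows "c \<sqsubseteq> x"
proof -
  obtain z where "upper_covers L z m" and "z \<sqsubseteq> x"
    using ex_upper_cover_le assms unfolding meet_irreducible_def by blast
  moreover have "z = c"
    using calculation(1) assms(2,3) unfolding meet_irreducible_def by blast
  ultimately show ?thesis
    by simp
qed

lemma join_irreducible_le_cover:
  assumes "finite (carrier L)" and "join_irreducible L j" and "upper_covers L j k"
    and "y \<in> carrier L" and "y \<sqsubset> j"
  shows "y \<sqsubseteq> k"
proof -
  obtain z where "upper_covers L j z" and "y \<sqsubseteq> z"
    using ex_lower_cover_ge assms unfolding join_irreducible_def by blast
  moreover have "z = k"
    using calculation(1) assms(2,3) unfolding join_irreducible_def by blast
  ultimately show ?thesis
    by simp
qed

lemma greatest_not_meet_irreducible:
  assumes "greatest L t (carrier L)"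
  shows "\<not> meet_irreducible L t"
  using assms by (auto simp: greatest_def meet_irreducible_def upper_covers_def lless_eq)

lemma up_set_greatest:
  assumes "greatest L t (carrier L)"
  shows "up_set L t = {t}"
  using assms by (auto simp: greatest_def up_set_def)

end

context lattice
begin

lemma finite_ex_greatest:
  assumes "finite (carrier L)" and "carrier L \<noteq> {}"
  shows "\<exists>t. greatest L t (carrier L)"
  using finite_sup_least[OF assms(1) subset_refl assms(2)]
  by (auto simp: least_def greatest_def Upper_def)

lemma meet_closed_ex_least:
  assumes "finite (carrier L)" and "A \<subseteq> carrier L" and "A \<noteq> {}"
    and closed: "\<And>x y. x \<in> A \<Longrightarrow> y \<in> A \<Longrightarrow> x \<sqinter> y \<in> A"
  shows "\<exists>a. least L a A"
proof -
  obtain a where a: "a \<in> A" and a_min: "\<forall>b\<in>A. \<not> b \<sqsubset> a"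
    using finite_ex_minimal[OF assms(1-3)] by blast
  have "a \<sqsubseteq> b" if "b \<in> A" for b
  proof -
    have carrier: "a \<in> carrier L" "b \<in> carrier L"
      using a that assms(2) by auto
    have "\<not> a \<sqinter> b \<sqsubset> a"
      using a_min closed[OF a that] by blast
    then have "a \<sqinter> b = a"
      using meet_left[OF carrier] by (simp add: lless_eq)
    then show ?thesis
      using meet_right[OF carrier] by simp
  qed
  with a assms(2) show ?thesis
    by (auto simp: least_def)
qed

lemma meet_irreducible_meet_eq:
  assumes "finite (carrier L)" and "meet_irreducible L (x \<sqinter> y)"
    and "x \<in> carrier L" and "y \<in> carrier L"
  shows "x \<sqinter> y = x \<or> x \<sqinter> y = y"
proof (rule ccontr)
  assume "\<not> ?thesis"
  then have "x \<sqinter> y \<sqsubset> x" and "x \<sqinter> y \<sqsubset> y"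
    using meet_left meet_right assms(3,4) by (auto simp: lless_eq)
  obtain c where c: "upper_covers L c (x \<sqinter> y)"
    using assms(2) unfolding meet_irreducible_def by blast
  then have "c \<sqsubseteq> x" and "c \<sqsubseteq> y"
    using meet_irreducible_cover_le assms \<open>x \<sqinter> y \<sqsubset> x\<close> \<open>x \<sqinter> y \<sqsubset> y\<close> by blast+
  then have "c \<sqsubseteq> x \<sqinter> y"
    using c assms(3,4) by (auto simp: upper_covers_def intro: meet_le)
  with c show False
    using assms(3,4) by (auto simp: upper_covers_def lless_eq)
qed

lemma meet_closed_diff_meet_irreducibles:
  assumes "finite (carrier L)" and "\<forall>m\<in>M. meet_irreducible L m"
    and "x \<in> carrier L - M" and "y \<in> carrier L - M"
  shows "x \<sqinter> y \<in> carrier L - M"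
  using meet_irreducible_meet_eq[OF assms(1), of x y] assms by auto

lemma join_irreducibleI_lower_covers_le:
  assumes "finite (carrier L)" and "x \<in> carrier L" and "k \<in> carrier L" and "\<not> x \<sqsubseteq> k"
    and covers_le: "\<And>a. upper_covers L x a \<Longrightarrow> a \<sqsubseteq> k"
  shows "join_irreducible L x"
  unfolding join_irreducible_def
proof (intro conjI ex_ex1I)
  show "x \<in> carrier L"
    by fact
  have "x \<sqinter> k \<sqsubseteq> x" and "x \<sqinter> k \<sqsubseteq> k"
    using assms(2,3) by (rule meet_left, rule meet_right)
  then have "x \<sqinter> k \<sqsubset> x"
    using assms(4) by (auto simp: lless_eq)
  then show "\<exists>a. upper_covers L x a"
    using ex_lower_cover_ge[OF assms(1,2) meet_closed[OF assms(2,3)]] by blast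
next
  fix a b
  assume a: "upper_covers L x a" and b: "upper_covers L x b"
  then have carrier: "a \<in> carrier L" "b \<in> carrier L" and "a \<sqsubseteq> x" "b \<sqsubseteq> x"
    by (auto simp: upper_covers_def lless_eq)
  then have join_carrier: "a \<squnion> b \<in> carrier L" and "a \<squnion> b \<sqsubseteq> x"
    using assms(2) by (simp_all add: join_le)
  moreover have "a \<squnion> b \<noteq> x"
    using join_le[OF covers_le[OF a] covers_le[OF b] carrier assms(3)] assms(4) by auto
  ultimately have "a \<squnion> b = a" and "a \<squnion> b = b"
    using upper_covers_interval[OF a join_carrier join_left[OF carrier]]
      upper_covers_interval[OF b join_carrier join_right[OF carrier]]
    by blast+
  then show "a = b"
    by simp
qed

lemma greatest_join_irreducible:
  assumes fin: "finite (carrier L)" and "1 < card (carrier L)" and t: "greatest L t (carrier L)"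
    and below_meet_irreducible: "\<forall>x\<in>carrier L - {t}. meet_irreducible L x"
  shows "join_irreducible L t"
  unfolding join_irreducible_def
proof (intro conjI ex_ex1I)
  show t_carrier: "t \<in> carrier L"
    using t by (rule greatest_closed)
  have "carrier L \<noteq> {t}"
    using \<open>1 < card (carrier L)\<close> by auto
  then obtain x where x: "x \<in> carrier L" "x \<noteq> t"
    using t_carrier by blast
  then have "x \<sqsubset> t"
    using greatest_le[OF t x(1)] by (simp add: lless_eq)
  then show "\<exists>a. upper_covers L t a"
    using ex_lower_cover_ge[OF fin t_carrier x(1)] by blast
next
  fix a b
  assume a: "upper_covers L t a" and b: "upper_covers L t b"
  then have carrier: "a \<in> carrier L" "b \<in> carrier L"
    and "a \<sqsubseteq> t" "a \<noteq> t" "b \<sqsubseteq> t" "b \<noteq> t"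
    by (auto simp: upper_covers_def lless_eq)
  have "a \<sqinter> b \<noteq> t"
  proof
    assume "a \<sqinter> b = t"
    then have "t \<sqsubseteq> a"
      using meet_left[OF carrier] by simp
    then show False
      using le_antisym[OF \<open>a \<sqsubseteq> t\<close>] carrier(1) greatest_closed[OF t] \<open>a \<noteq> t\<close> by blast
  qed
  then have "meet_irreducible L (a \<sqinter> b)"
    using below_meet_irreducible meet_closed[OF carrier] by blast
  then have "a \<sqinter> b = a \<or> a \<sqinter> b = b"
    using fin carrier by (intro meet_irreducible_meet_eq)
  then show "a = b"
  proof
    assume "a \<sqinter> b = a"
    then have "a \<sqsubseteq> b"
      using meet_right[OF carrier] by simp
    then show "a = b"
      using upper_covers_interval[OF a carrier(2) _ \<open>b \<sqsubseteq> t\<close>] \<open>b \<noteq> t\<close> by auto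
  next
    assume "a \<sqinter> b = b"
    then have "b \<sqsubseteq> a"
      using meet_left[OF carrier] by simp
    then show "a = b"
      using upper_covers_interval[OF b carrier(1) _ \<open>a \<sqsubseteq> t\<close>] \<open>a \<noteq> t\<close> by auto
  qed
qed

lemma lattice_restrict_meet_closed:
  assumes fin: "finite (carrier L)" and S: "S \<subseteq> carrier L"
    and "t \<in> S" and "greatest L t (carrier L)"
    and closed: "\<And>x y. x \<in> S \<Longrightarrow> y \<in> S \<Longrightarrow> x \<sqinter> y \<in> S"
  shows "lattice (L\<lparr>carrier := S\<rparr>)"
proof -
  interpret K: partial_order "L\<lparr>carrier := S\<rparr>"
    using partial_order_axioms S by (rule partial_order_restrict)
  show ?thesis
  proof unfold_locales
    fix x y
    assume "x \<in> carrier (L\<lparr>carrier := S\<rparr>)" and "y \<in> carrier (L\<lparr>carrier := S\<rparr>)"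
    then have xy: "x \<in> S" "y \<in> S" "x \<in> carrier L" "y \<in> carrier L"
      using S by auto
    let ?U = "{s \<in> S. x \<sqsubseteq> s \<and> y \<sqsubseteq> s}"
    have "?U \<noteq> {}"
      using \<open>t \<in> S\<close> assms(4) xy by (auto simp: greatest_def)
    moreover have "a \<sqinter> b \<in> ?U" if "a \<in> ?U" and "b \<in> ?U" for a b
      using that closed S xy by (auto intro: meet_le)
    ultimately obtain u where "least L u ?U"
      using meet_closed_ex_least[OF fin, of ?U] S by blast
    moreover have "Upper (L\<lparr>carrier := S\<rparr>) {x, y} = ?U"
      using xy by (auto simp: Upper_def)
    ultimately show "\<exists>s. least (L\<lparr>carrier := S\<rparr>) s (Upper (L\<lparr>carrier := S\<rparr>) {x, y})"
      by (auto simp: least_def)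
    have "Lower (L\<lparr>carrier := S\<rparr>) {x, y} = {s \<in> S. s \<sqsubseteq> x \<and> s \<sqsubseteq> y}"
      using xy by (auto simp: Lower_def)
    then have "greatest (L\<lparr>carrier := S\<rparr>) (x \<sqinter> y) (Lower (L\<lparr>carrier := S\<rparr>) {x, y})"
      using xy S closed by (auto simp: greatest_def intro: meet_left meet_right meet_le)
    then show "\<exists>s. greatest (L\<lparr>carrier := S\<rparr>) s (Lower (L\<lparr>carrier := S\<rparr>) {x, y})"
      by blast
  qed
qed

lemma ex_join_irreducible_up_set_restrict:
  assumes fin: "finite (carrier L)" and S: "S \<subseteq> carrier L"
    and closed: "\<And>x y. x \<in> S \<Longrightarrow> y \<in> S \<Longrightarrow> x \<sqinter> y \<in> S"
    and j: "join_irreducible (L\<lparr>carrier := S\<rparr>) j"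
  shows "\<exists>x. join_irreducible L x \<and> up_set L x \<inter> S = up_set (L\<lparr>carrier := S\<rparr>) j"
proof -
  interpret K: partial_order "L\<lparr>carrier := S\<rparr>"
    using partial_order_axioms S by (rule partial_order_restrict)
  have fin_S: "finite (carrier (L\<lparr>carrier := S\<rparr>))"
    using fin S by (simp add: finite_subset)
  obtain k where k: "upper_covers (L\<lparr>carrier := S\<rparr>) j k"
    using j unfolding join_irreducible_def by blast
  then have "j \<in> S" "k \<in> S" "k \<sqsubseteq> j" "k \<noteq> j"
    by (auto simp: upper_covers_def lless_eq)
  then have jk: "j \<in> carrier L" "k \<in> carrier L" "\<not> j \<sqsubseteq> k"
    using S by auto
  define P where "P = {x \<in> carrier L. \<forall>s\<in>S. x \<sqsubseteq> s \<longleftrightarrow> j \<sqsubseteq> s}"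
  obtain x where "x \<in> P" and x_min: "\<forall>b\<in>P. \<not> b \<sqsubset> x"
    using finite_ex_minimal[OF fin, of P] jk(1) by (auto simp: P_def)
  then have x: "x \<in> carrier L" "\<And>s. s \<in> S \<Longrightarrow> x \<sqsubseteq> s \<longleftrightarrow> j \<sqsubseteq> s"
    by (auto simp: P_def)
  have "x \<sqsubseteq> j"
    using x(2) \<open>j \<in> S\<close> jk(1) by simp
  txt \<open>A lower cover \<open>a\<close> of \<open>x\<close> is not in \<open>P\<close>, so some \<open>s \<in> S\<close> lies above \<open>a\<close> but not
    above \<open>j\<close>; then \<open>s \<sqinter> j\<close> is an element of \<open>S\<close> strictly below \<open>j\<close>, hence below \<open>k\<close>.\<close>
  have "a \<sqsubseteq> k" if a: "upper_covers L x a" for a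
  proof -
    have "a \<in> carrier L" "a \<sqsubset> x"
      using a by (auto simp: upper_covers_def)
    moreover have "a \<notin> P"
      using x_min \<open>a \<sqsubset> x\<close> by blast
    ultimately obtain s where "s \<in> S" and "\<not> (a \<sqsubseteq> s \<longleftrightarrow> j \<sqsubseteq> s)"
      by (auto simp: P_def)
    moreover have "a \<sqsubseteq> s" if "s \<in> S" and "j \<sqsubseteq> s"
      using that x S \<open>a \<in> carrier L\<close> \<open>a \<sqsubset> x\<close> by (auto simp: lless_eq intro: le_trans)
    ultimately have s: "s \<in> S" "a \<sqsubseteq> s" "\<not> j \<sqsubseteq> s"
      by blast+
    have "s \<in> carrier L"
      using s(1) S by auto
    then have "s \<sqinter> j \<sqsubseteq> s" and "s \<sqinter> j \<sqsubseteq> j"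
      using jk(1) by (rule meet_left, rule meet_right)
    then have "s \<sqinter> j \<sqsubset>\<^bsub>L\<lparr>carrier := S\<rparr>\<^esub> j"
      using s(3) by (auto simp: lless_eq)
    then have "s \<sqinter> j \<sqsubseteq> k"
      using K.join_irreducible_le_cover[OF fin_S j k] closed s(1) \<open>j \<in> S\<close> by simp
    moreover have "a \<sqsubseteq> s \<sqinter> j"
      using s S \<open>a \<sqsubset> x\<close> \<open>x \<sqsubseteq> j\<close> x(1) jk(1) \<open>a \<in> carrier L\<close>
      by (auto simp: lless_eq intro: meet_le le_trans)
    ultimately show ?thesis
      using \<open>a \<in> carrier L\<close> meet_closed[OF \<open>s \<in> carrier L\<close> jk(1)] jk(2)
      by (blast intro: le_trans)
  qed
  then have "join_irreducible L x"
    using join_irreducibleI_lower_covers_le[OF fin x(1) jk(2)] x(2) \<open>k \<in> S\<close> jk by blast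
  moreover have "up_set L x \<inter> S = up_set (L\<lparr>carrier := S\<rparr>) j"
    using x S by (auto simp: up_set_def)
  ultimately show ?thesis
    by blast
qed

lemma lattice_diff_meet_irreducibles:
  assumes fin: "finite (carrier L)" and "carrier L \<noteq> {}"
    and M: "\<forall>m\<in>M. meet_irreducible L m"
  shows "lattice (L\<lparr>carrier := carrier L - M\<rparr>)"
proof -
  obtain t where t: "greatest L t (carrier L)"
    using finite_ex_greatest[OF fin] assms(2) by blast
  moreover have "t \<in> carrier L - M"
    using t greatest_not_meet_irreducible M by auto
  ultimately show ?thesis
    using lattice_restrict_meet_closed[OF fin Diff_subset _ _ meet_closed_diff_meet_irreducibles[OF fin M]]
    by simp
qed

end

lemma counterexample_greatest_not_join_irreducible:
  assumes "counterexample L" and "greatest L t (carrier L)"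
  shows "\<not> join_irreducible L t"
proof
  assume "join_irreducible L t"
  moreover interpret lattice L
    using assms(1) by (simp add: counterexample_def)
  have "up_set L t = {t}"
    using assms(2) by (rule up_set_greatest)
  ultimately show False
    using assms(1) by (auto simp: counterexample_def)
qed

lemma counterexample_card_diff_meet_irreducibles:
  assumes ce: "counterexample L" and M: "\<forall>m\<in>M. meet_irreducible L m"
  shows "1 < card (carrier L - M)"
proof (rule ccontr)
  assume small: "\<not> 1 < card (carrier L - M)"
  interpret lattice L
    using ce by (simp add: counterexample_def)
  have fin: "finite (carrier L)" and "1 < card (carrier L)"
    using ce by (auto simp: counterexample_def)
  then obtain t where t: "greatest L t (carrier L)"
    using finite_ex_greatest by fastforce
  then have "t \<in> carrier L - M"
    using greatest_not_meet_irreducible M by auto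
  moreover have "card (carrier L - M) \<le> Suc 0"
    using small by simp
  ultimately have "carrier L - M = {t}"
    using fin by (auto simp: card_le_Suc0_iff_eq)
  then have "\<forall>x\<in>carrier L - {t}. meet_irreducible L x"
    using M by blast
  then have "join_irreducible L t"
    by (rule greatest_join_irreducible[OF fin \<open>1 < card (carrier L)\<close> t])
  then show False
    using counterexample_greatest_not_join_irreducible[OF ce t] by blast
qed

lemma counterexample_up_set_diff_meet_irreducibles:
  assumes ce: "counterexample L" and M: "\<forall>m\<in>M. meet_irreducible L m"
    and few_above: "\<And>j. join_irreducible L j \<Longrightarrow> real (card (up_set L j \<inter> M)) \<le> real (card M) / 2"
    and j: "join_irreducible (L\<lparr>carrier := carrier L - M\<rparr>) j"
  shows "real (card (carrier L - M)) / 2 < real (card (up_set (L\<lparr>carrier := carrier L - M\<rparr>) j))"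
proof (rule ccontr)
  assume j_small: "\<not> ?thesis"
  interpret lattice L
    using ce by (simp add: counterexample_def)
  have fin: "finite (carrier L)"
    using ce by (simp add: counterexample_def)
  obtain x where x: "join_irreducible L x"
    and x_up: "up_set L x \<inter> (carrier L - M) = up_set (L\<lparr>carrier := carrier L - M\<rparr>) j"
    using ex_join_irreducible_up_set_restrict[OF fin Diff_subset
        meet_closed_diff_meet_irreducibles[OF fin M] j]
    by blast
  have "finite (up_set L x)"
    using fin by (simp add: up_set_def)
  then have "card (up_set L x) = card (up_set L x \<inter> M) + card (up_set L x - M)"
    by (rule card_Int_Diff)
  also have "up_set L x - M = up_set L x \<inter> (carrier L - M)"
    by (auto simp: up_set_def)
  finally have split_up: "card (up_set L x)
      = card (up_set L x \<inter> M) + card (up_set (L\<lparr>carrier := carrier L - M\<rparr>) j)"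
    unfolding x_up .
  have "M \<subseteq> carrier L"
    using M by (auto simp: meet_irreducible_def)
  then have split_L: "card (carrier L) = card M + card (carrier L - M)"
    using card_Int_Diff[OF fin, of M] by (simp add: Int_absorb1)
  have "real (card (up_set L x)) \<le> real (card (carrier L)) / 2"
    using few_above[OF x] j_small
    unfolding split_up split_L of_nat_add add_divide_distrib by linarith
  moreover have "real (card (carrier L)) / 2 < real (card (up_set L x))"
    using ce x by (simp add: counterexample_def)
  ultimately show False
    by linarith
qed

lemma counterexample_diff_meet_irreducibles:
  assumes ce: "counterexample L" and M: "\<forall>m\<in>M. meet_irreducible L m"
    and few_above: "\<And>j. join_irreducible L j \<Longrightarrow> real (card (up_set L j \<inter> M)) \<le> real (card M) / 2"
  shows "counterexample (L\<lparr>carrier := carrier L - M\<rparr>)"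
  unfolding counterexample_def
proof (intro conjI allI impI)
  interpret lattice L
    using ce by (simp add: counterexample_def)
  have "finite (carrier L)" and "carrier L \<noteq> {}"
    using ce by (auto simp: counterexample_def)
  then show "lattice (L\<lparr>carrier := carrier L - M\<rparr>)"
    using M by (rule lattice_diff_meet_irreducibles)
  show "finite (carrier (L\<lparr>carrier := carrier L - M\<rparr>))"
    using \<open>finite (carrier L)\<close> by simp
  show "1 < card (carrier (L\<lparr>carrier := carrier L - M\<rparr>))"
    using counterexample_card_diff_meet_irreducibles[OF ce M] by simp
  fix j
  assume "join_irreducible (L\<lparr>carrier := carrier L - M\<rparr>) j"
  from counterexample_up_set_diff_meet_irreducibles[OF ce M few_above this]
  show "real (card (carrier (L\<lparr>carrier := carrier L - M\<rparr>))) / 2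
      < real (card (up_set (L\<lparr>carrier := carrier L - M\<rparr>) j))"
    by simp
qed

theorem theorem2p9:
  fixes L :: "'a gorder" and M :: "'a set"
  assumes "min_counterexample L"
    and "M \<noteq> {}"
    and "\<forall>m \<in> M. meet_irreducible L m"
  shows "\<exists>j. join_irreducible L j \<and> real (card (up_set L j \<inter> M)) > real (card M) / 2"
proof (rule ccontr)
  assume "\<not> ?thesis"
  then have few_above: "\<And>j. join_irreducible L j \<Longrightarrow> real (card (up_set L j \<inter> M)) \<le> real (card M) / 2"
    by (meson not_less)
  have ce: "counterexample L"
    and minimal: "\<And>K :: 'a gorder. counterexample K \<Longrightarrow> card (carrier L) \<le> card (carrier K)"
    using assms(1) unfolding min_counterexample_def by blast+
  have "counterexample (L\<lparr>carrier := carrier L - M\<rparr>)"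
    using ce assms(3) few_above by (rule counterexample_diff_meet_irreducibles)
  then have "card (carrier L) \<le> card (carrier (L\<lparr>carrier := carrier L - M\<rparr>))"
    by (rule minimal)
  moreover have "carrier L - M \<subset> carrier L"
    using assms(2,3) by (auto simp: meet_irreducible_def)
  then have "card (carrier L - M) < card (carrier L)"
    using ce by (simp add: psubset_card_mono counterexample_def)
  ultimately show False
    by simp
qed

end
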